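(* Let $X$ be a finite topological space and $x,y\in X$ with $\Psi(x,y)=k$. If $(U_j)_{j\ge0}$ is any nested sequence of open sets around $x$ with $y\in U_k$, then $U_k=U_x\cup U_y$.
   Context: For a finite topological space $X$ and $x\in X$, $U_x$ denotes the minimal open set containing $x$ (the intersection of all open sets containing $x$). A nested sequence of open sets around $x$ is a finite sequence $U_0\subsetneq U_1\subsetneq\cdots\subsetneq U_m=X$ of open sets with $U_0=U_x$ such that for each $j$ there is no open set $V$ with $U_j\subsetneq V\subsetneq U_{j+1}$. The furtherness function $\Psi:X\times X\to\{0,1,\dots,|X|-1\}$ is defined by: $\Psi(x,y)$ is the smallest integer $k\ge 0$ such that there exists a nested sequence $(U_j)_{j\ge0}$ of open sets around $x$ with $y\in U_k$. *)

theory Defs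
  imports "HOL-Analysis.Analysis"
begin

definition minopen :: "'a topology \<Rightarrow> 'a \<Rightarrow> 'a set" where
  "minopen T x = \<Inter>{U. openin T U \<and> x \<in> U}"

definition nested_seq :: "'a topology \<Rightarrow> 'a \<Rightarrow> (nat \<Rightarrow> 'a set) \<Rightarrow> nat \<Rightarrow> bool" where
  "nested_seq T x U m \<longleftrightarrow>
     U 0 = minopen T x \<and> U m = topspace T \<and>
     (\<forall>j\<le>m. openin T (U j)) \<and>
     (\<forall>j<m. U j \<subset> U (Suc j) \<and>
            \<not> (\<exists>V. openin T V \<and> U j \<subset> V \<and> V \<subset> U (Suc j)))"

definition Psi :: "'a topology \<Rightarrow> 'a \<Rightarrow> 'a \<Rightarrow> nat" where
  "Psi T x y = (LEAST k. \<exists>U m. nested_seq T x U m \<and> k \<le> m \<and> y \<in> U k)"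

end

theory Submission
  imports Defs
begin

text \<open>In a finite space, rank an open set by the number of distinct minimal open sets \<open>U\<^sub>z\<close>
  of its points. A covering step \<open>A \<subset> B\<close> between open sets adds exactly one of them, so along
  every nested sequence around \<open>x\<close> the rank of \<open>U\<^sub>j\<close> is \<open>rank U\<^sub>x + j\<close>. The open set
  \<open>U\<^sub>x \<union> U\<^sub>y\<close> lies in \<open>U\<^sub>k\<close> and sits on some nested sequence around \<open>x\<close>; were it a proper subset,
  its smaller rank would place it at a step \<open>r < k\<close> of that sequence, contradicting \<open>\<Psi>(x,y) = k\<close>.\<close>

lemma minopen_mem: "z \<in> topspace T \<Longrightarrow> z \<in> minopen T z"
  unfolding minopen_def by auto

lemma minopen_least: "openin T V \<Longrightarrow> z \<in> V \<Longrightarrow> minopen T z \<subseteq> V"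
  unfolding minopen_def by auto

lemma openin_minopen:
  assumes "finite (topspace T)" "z \<in> topspace T"
  shows "openin T (minopen T z)"
proof -
  have "{U. openin T U \<and> z \<in> U} \<subseteq> Pow (topspace T)"
    using openin_subset by blast
  then have "finite {U. openin T U \<and> z \<in> U}"
    using assms(1) finite_subset by blast
  moreover have "topspace T \<in> {U. openin T U \<and> z \<in> U}"
    using assms(2) by auto
  ultimately show ?thesis
    unfolding minopen_def by (intro openin_Inter) auto
qed

lemma minopen_in_image_iff:
  assumes "openin T W" "z \<in> topspace T"
  shows "minopen T z \<in> minopen T ` W \<longleftrightarrow> z \<in> W"
proof
  assume "minopen T z \<in> minopen T ` W"
  then obtain w where "w \<in> W" "minopen T z = minopen T w" by auto
  then show "z \<in> W"
    using minopen_mem[OF assms(2)] minopen_least[OF assms(1)] by blast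
qed auto

definition open_rank :: "'a topology \<Rightarrow> 'a set \<Rightarrow> nat" where
  "open_rank T A = card (minopen T ` A)"

definition open_covers :: "'a topology \<Rightarrow> 'a set \<Rightarrow> 'a set \<Rightarrow> bool" where
  "open_covers T A B \<longleftrightarrow> openin T A \<and> openin T B \<and> A \<subset> B \<and>
     \<not> (\<exists>W. openin T W \<and> A \<subset> W \<and> W \<subset> B)"

definition open_chain :: "'a topology \<Rightarrow> (nat \<Rightarrow> 'a set) \<Rightarrow> nat \<Rightarrow> bool" where
  "open_chain T V n \<longleftrightarrow> openin T (V 0) \<and> (\<forall>j<n. open_covers T (V j) (V (Suc j)))"

lemma open_chain_openin:
  assumes "open_chain T V n" "j \<le> n"
  shows "openin T (V j)"
proof (cases j)
  case 0
  then show ?thesis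
    using assms(1) unfolding open_chain_def by simp
next
  case (Suc i)
  then have "open_covers T (V i) (V j)"
    using assms unfolding open_chain_def by simp
  then show ?thesis
    unfolding open_covers_def by simp
qed

lemma nested_seq_iff_open_chain:
  "nested_seq T x U m \<longleftrightarrow> U 0 = minopen T x \<and> U m = topspace T \<and> open_chain T U m"
proof
  assume "nested_seq T x U m"
  then show "U 0 = minopen T x \<and> U m = topspace T \<and> open_chain T U m"
    unfolding nested_seq_def open_chain_def open_covers_def by (metis le0 less_imp_le_nat Suc_leI)
next
  assume "U 0 = minopen T x \<and> U m = topspace T \<and> open_chain T U m"
  then show "nested_seq T x U m"
    using open_chain_openin[of T U m]
    unfolding nested_seq_def open_chain_def open_covers_def by blast
qed

lemma open_rank_strict_mono:
  assumes "finite (topspace T)" "openin T W" "B \<subseteq> topspace T" "W \<subset> B"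
  shows "open_rank T W < open_rank T B"
proof -
  obtain z where z: "z \<in> B" "z \<notin> W"
    using assms(4) by auto
  moreover have "z \<in> topspace T"
    using z assms(3) by blast
  ultimately have "minopen T z \<notin> minopen T ` W"
    using minopen_in_image_iff[OF assms(2)] by simp
  then have "minopen T ` W \<subset> minopen T ` B"
    using assms(4) z by auto
  moreover have "finite (minopen T ` B)"
    using finite_subset[OF assms(3,1)] by simp
  ultimately show ?thesis
    unfolding open_rank_def by (rule psubset_card_mono[rotated])
qed

lemma open_rank_covers:
  assumes fin: "finite (topspace T)" and cov: "open_covers T A B"
  shows "open_rank T B = Suc (open_rank T A)"
proof -
  have oA: "openin T A" and oB: "openin T B" and AB: "A \<subset> B"
    using cov unfolding open_covers_def by auto
  have Bt: "B \<subseteq> topspace T"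
    using oB openin_subset by auto
  have fill: "B = A \<union> minopen T w" if "w \<in> B - A" for w
  proof -
    have "w \<in> topspace T" using that Bt by auto
    then have "openin T (A \<union> minopen T w)" "A \<subset> A \<union> minopen T w"
      using oA openin_minopen[OF fin] minopen_mem[of w T] that by auto
    moreover have "A \<union> minopen T w \<subseteq> B"
      using minopen_least[OF oB] that AB by auto
    ultimately show ?thesis
      using cov unfolding open_covers_def by blast
  qed
  obtain z where z: "z \<in> B - A"
    using AB by auto
  have "minopen T w = minopen T z" if w: "w \<in> B - A" for w
  proof -
    have "w \<in> minopen T z" "z \<in> minopen T w"
      using fill[OF z] fill[OF w] w z by auto
    moreover have "w \<in> topspace T" "z \<in> topspace T"
      using Bt w z by auto
    ultimately show ?thesis
      using minopen_least openin_minopen[OF fin] by (meson subset_antisym)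
  qed
  then have "minopen T ` B = insert (minopen T z) (minopen T ` A)"
    using z AB by blast
  moreover have "minopen T z \<notin> minopen T ` A"
    using minopen_in_image_iff[OF oA] z Bt by auto
  moreover have "finite A"
    using finite_subset[OF _ fin] AB Bt by auto
  ultimately show ?thesis
    unfolding open_rank_def by simp
qed

lemma open_chain_rank:
  assumes "finite (topspace T)" "open_chain T V n" "j \<le> n"
  shows "open_rank T (V j) = open_rank T (V 0) + j"
  using assms(3)
proof (induction j)
  case (Suc j)
  then have "open_covers T (V j) (V (Suc j))"
    using assms(2) unfolding open_chain_def by simp
  with Suc show ?case
    using open_rank_covers[OF assms(1)] by simp
qed simp

lemma open_chain_subset:
  assumes "open_chain T V n" "j \<le> n"
  shows "V 0 \<subseteq> V j"
  using assms(2)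
proof (induction j)
  case (Suc j)
  then have "V j \<subset> V (Suc j)"
    using assms(1) unfolding open_chain_def open_covers_def by simp
  with Suc show ?case by simp
qed simp

lemma open_chain_append:
  assumes "open_chain T V n" "open_chain T V' n'" "V n = V' 0"
  shows "open_chain T (\<lambda>i. if i \<le> n then V i else V' (i - n)) (n + n')"
  unfolding open_chain_def
proof (intro conjI allI impI)
  show "openin T (if 0 \<le> n then V 0 else V' (0 - n))"
    using assms(1) unfolding open_chain_def by simp
next
  fix j assume "j < n + n'"
  consider "j < n" | "j = n" | "n < j"
    by linarith
  then show "open_covers T (if j \<le> n then V j else V' (j - n))
      (if Suc j \<le> n then V (Suc j) else V' (Suc j - n))"
  proof cases
    case 1
    then show ?thesis using assms(1) unfolding open_chain_def by simp
  next
    case 2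
    then show ?thesis using assms(2,3) \<open>j < n + n'\<close> unfolding open_chain_def by simp
  next
    case 3
    then have "j - n < n'" "Suc j - n = Suc (j - n)"
      using \<open>j < n + n'\<close> by auto
    then show ?thesis using assms(2) 3 unfolding open_chain_def by simp
  qed
qed

lemma exists_open_covers_below:
  assumes "finite (topspace T)" "openin T A" "openin T B" "A \<subset> B"
  obtains C where "open_covers T A C" "C \<subseteq> B"
proof -
  let ?S = "{C. openin T C \<and> A \<subset> C \<and> C \<subseteq> B}"
  have "finite ?S"
    using assms(1) openin_subset by (blast intro: finite_subset[of _ "Pow (topspace T)"])
  moreover have "B \<in> ?S"
    using assms(3,4) by simp
  ultimately obtain C where C: "C \<in> ?S" and minimal: "\<forall>D\<in>?S. D \<le> C \<longrightarrow> C = D"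
    using finite_has_minimal[of ?S] by blast
  have no_between: "\<not> (openin T W \<and> A \<subset> W \<and> W \<subset> C)" for W
  proof
    assume W: "openin T W \<and> A \<subset> W \<and> W \<subset> C"
    then have "W \<in> ?S"
      using C by auto
    then show False
      using minimal W by auto
  qed
  have "open_covers T A C"
    unfolding open_covers_def using assms(2) C no_between by blast
  with C show thesis
    using that by blast
qed

lemma exists_open_chain:
  assumes "finite (topspace T)" "openin T A" "openin T B" "A \<subseteq> B"
  obtains V n where "open_chain T V n" "V 0 = A" "V n = B"
  using assms(2,4)
proof (induction "card (B - A)" arbitrary: A thesis rule: less_induct)
  case less
  show ?case
  proof (cases "A = B")
    case True
    then show ?thesis
      using less.prems(1)[of "\<lambda>_. A" 0] less.prems(2) by (simp add: open_chain_def)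
  next
    case False
    then obtain C where AC: "open_covers T A C" and "C \<subseteq> B"
      using exists_open_covers_below assms(1,3) less.prems(2,3) by blast
    have "finite (B - A)"
      using finite_subset[OF _ assms(1)] openin_subset[OF assms(3)] by blast
    moreover have "B - C \<subset> B - A"
      using AC \<open>C \<subseteq> B\<close> unfolding open_covers_def by blast
    ultimately have "card (B - C) < card (B - A)"
      by (rule psubset_card_mono)
    then obtain V n where V: "open_chain T V n" "V 0 = C" "V n = B"
      using less.hyps \<open>C \<subseteq> B\<close> AC unfolding open_covers_def by blast
    have "open_chain T (\<lambda>i. if i = 0 then A else C) 1"
      using AC unfolding open_chain_def open_covers_def by simp
    from open_chain_append[OF this V(1)] show ?thesis
      using less.prems(1) V(2,3) by fastforce
  qed
qed

lemma exists_nested_seq_through: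
  assumes "finite (topspace T)" "x \<in> topspace T" "openin T W" "minopen T x \<subseteq> W"
  obtains U m r where "nested_seq T x U m" "r \<le> m" "U r = W"
proof -
  obtain V n where V: "open_chain T V n" "V 0 = minopen T x" "V n = W"
    using exists_open_chain[OF assms(1) openin_minopen[OF assms(1,2)] assms(3,4)] by blast
  obtain V' n' where V': "open_chain T V' n'" "V' 0 = W" "V' n' = topspace T"
    using exists_open_chain[OF assms(1,3)] openin_subset[OF assms(3)] by blast
  have "nested_seq T x (\<lambda>i. if i \<le> n then V i else V' (i - n)) (n + n')"
    unfolding nested_seq_iff_open_chain using open_chain_append[OF V(1) V'(1)] V(2,3) V'(2,3)
    by (cases "n' = 0") auto
  with V(3) show thesis
    using that[of _ _ n] by simp
qed

lemma Psi_le: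
  assumes "nested_seq T x U m" "r \<le> m" "y \<in> U r"
  shows "Psi T x y \<le> r"
  unfolding Psi_def using assms by (blast intro: Least_le)

theorem mainTheorem5:
  fixes T :: "'a topology" and x y :: 'a and k m :: nat and U :: "nat \<Rightarrow> 'a set"
  assumes "finite (topspace T)"
    and "x \<in> topspace T" and "y \<in> topspace T"
    and "Psi T x y = k"
    and "nested_seq T x U m" and "k \<le> m" and "y \<in> U k"
  shows "U k = minopen T x \<union> minopen T y"
proof (rule ccontr)
  define W where "W = minopen T x \<union> minopen T y"
  assume "U k \<noteq> W"
  have chain: "open_chain T U m" and U0: "U 0 = minopen T x"
    using assms(5) unfolding nested_seq_iff_open_chain by auto
  have oUk: "openin T (U k)"
    using open_chain_openin[OF chain assms(6)] .
  have oW: "openin T W"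
    unfolding W_def using openin_minopen assms(1-3) by (intro openin_Un)
  have "W \<subseteq> U k"
    using open_chain_subset[OF chain assms(6)] minopen_least[OF oUk assms(7)] U0
    unfolding W_def by simp
  with \<open>U k \<noteq> W\<close> have "W \<subset> U k" by simp
  obtain V n r where V: "nested_seq T x V n" "r \<le> n" "V r = W"
    using exists_nested_seq_through[OF assms(1,2) oW] W_def by blast
  have "y \<in> V r"
    using V(3) minopen_mem[OF assms(3)] unfolding W_def by simp
  then have "k \<le> r"
    using Psi_le[OF V(1,2)] assms(4) by blast
  moreover have "open_rank T W = open_rank T (minopen T x) + r"
    using V(1) open_chain_rank[OF assms(1) _ V(2)] V(3) unfolding nested_seq_iff_open_chain by auto
  moreover have "open_rank T (U k) = open_rank T (minopen T x) + k"
    using open_chain_rank[OF assms(1) chain assms(6)] U0 by simp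
  moreover have "open_rank T W < open_rank T (U k)"
    using open_rank_strict_mono[OF assms(1) oW openin_subset[OF oUk] \<open>W \<subset> U k\<close>] .
  ultimately show False
    by simp
qed

end
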